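(* Let $p,r$ be distinct primes with $p\geq 3$, and let $G$ be a finite group with $G=O^{p'}(G)$ that acts faithfully and completely reducibly on an elementary abelian $r$-group $V$. Assume that $|G|_p=p^c\geq p^2$, that $O_p(G)$ is cyclic of order $p$ and acts fixed-point-freely on $V$, and that every nonidentity element of $V$ is fixed by a unique subgroup of $G$ of order $p^{c-1}$. Then $G$ acts primitively on $V$.
   Context: $O^{p'}(G)$ is the smallest normal subgroup of $G$ whose index is not divisible by $p$; $O_p(G)$ is the largest normal $p$-subgroup of $G$; $|G|_p$ is the $p$-part of $|G|$. A group $U$ acts fixed-point-freely on $V$ if $U\ltimes V$ is a Frobenius group with complement $U$ and kernel $V$ (i.e. each nonidentity element of $U$ fixes only the identity of $V$). An irreducible $G$-module $V$ is imprimitive if $V=V_1\oplus\cdots\oplus V_n$ for some $n\geq 2$ subspaces $V_i$ permuted transitively by $G$; $V$ is primitive if it is irreducible and not imprimitive. *)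

theory Defs
  imports "HOL-Algebra.Algebra" "HOL-Computational_Algebra.Primes"
begin

definition p_subgroup :: "('g, 'm) monoid_scheme \<Rightarrow> nat \<Rightarrow> 'g set \<Rightarrow> bool" where
  "p_subgroup G p H \<longleftrightarrow> subgroup H G \<and> finite H \<and> (\<exists>k. card H = p ^ k)"

definition O_p :: "('g, 'm) monoid_scheme \<Rightarrow> nat \<Rightarrow> 'g set" where
  "O_p G p = (THE N. p_subgroup G p N \<and> N \<lhd> G \<and>
                 (\<forall>M. p_subgroup G p M \<and> M \<lhd> G \<longrightarrow> M \<subseteq> N))"

definition O_p_prime_upper :: "('g, 'm) monoid_scheme \<Rightarrow> nat \<Rightarrow> 'g set" where
  "O_p_prime_upper G p =
     \<Inter>{N. N \<lhd> G \<and> \<not> p dvd card (rcosets\<^bsub>G\<^esub> N)}"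

definition elem_abelian :: "('v, 'n) monoid_scheme \<Rightarrow> nat \<Rightarrow> bool" where
  "elem_abelian V r \<longleftrightarrow> comm_group V \<and> finite (carrier V) \<and>
     (\<forall>v \<in> carrier V. v [^]\<^bsub>V\<^esub> r = \<one>\<^bsub>V\<^esub>)"

definition linear_action ::
  "('g, 'm) monoid_scheme \<Rightarrow> ('v, 'n) monoid_scheme \<Rightarrow> ('g \<Rightarrow> 'v \<Rightarrow> 'v) \<Rightarrow> bool" where
  "linear_action G V \<phi> \<longleftrightarrow> group_action G (carrier V) \<phi> \<and>
     (\<forall>g \<in> carrier G. \<phi> g \<in> hom V V)"

definition faithful_lin_action ::
  "('g, 'm) monoid_scheme \<Rightarrow> ('v, 'n) monoid_scheme \<Rightarrow> ('g \<Rightarrow> 'v \<Rightarrow> 'v) \<Rightarrow> bool" where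
  "faithful_lin_action G V \<phi> \<longleftrightarrow> linear_action G V \<phi> \<and> inj_on \<phi> (carrier G)"

text \<open>G-submodules (for elementary abelian V, subgroups are exactly the F_r-subspaces).\<close>
definition submodule ::
  "('g, 'm) monoid_scheme \<Rightarrow> ('v, 'n) monoid_scheme \<Rightarrow> ('g \<Rightarrow> 'v \<Rightarrow> 'v) \<Rightarrow> 'v set \<Rightarrow> bool" where
  "submodule G V \<phi> W \<longleftrightarrow> subgroup W V \<and> (\<forall>g \<in> carrier G. \<phi> g ` W \<subseteq> W)"

definition completely_reducible ::
  "('g, 'm) monoid_scheme \<Rightarrow> ('v, 'n) monoid_scheme \<Rightarrow> ('g \<Rightarrow> 'v \<Rightarrow> 'v) \<Rightarrow> bool" where
  "completely_reducible G V \<phi> \<longleftrightarrow>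
     (\<forall>W. submodule G V \<phi> W \<longrightarrow>
        (\<exists>U. submodule G V \<phi> U \<and> W \<inter> U = {\<one>\<^bsub>V\<^esub>} \<and> W <#>\<^bsub>V\<^esub> U = carrier V))"

definition irreducible_mod ::
  "('g, 'm) monoid_scheme \<Rightarrow> ('v, 'n) monoid_scheme \<Rightarrow> ('g \<Rightarrow> 'v \<Rightarrow> 'v) \<Rightarrow> bool" where
  "irreducible_mod G V \<phi> \<longleftrightarrow> carrier V \<noteq> {\<one>\<^bsub>V\<^esub>} \<and>
     (\<forall>W. submodule G V \<phi> W \<longrightarrow> W = {\<one>\<^bsub>V\<^esub>} \<or> W = carrier V)"

definition internal_direct_sum :: "('v, 'n) monoid_scheme \<Rightarrow> 'v set set \<Rightarrow> bool" where
  "internal_direct_sum V S \<longleftrightarrow> finite S \<and> (\<forall>W \<in> S. subgroup W V) \<and>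
     (\<forall>v \<in> carrier V. \<exists>!f. f \<in> (\<Pi>\<^sub>E W \<in> S. W) \<and> finprod V f S = v)"

definition imprimitive ::
  "('g, 'm) monoid_scheme \<Rightarrow> ('v, 'n) monoid_scheme \<Rightarrow> ('g \<Rightarrow> 'v \<Rightarrow> 'v) \<Rightarrow> bool" where
  "imprimitive G V \<phi> \<longleftrightarrow> irreducible_mod G V \<phi> \<and>
     (\<exists>S. internal_direct_sum V S \<and> card S \<ge> 2 \<and>
        (\<forall>g \<in> carrier G. \<forall>W \<in> S. \<phi> g ` W \<in> S) \<and>
        (\<forall>W1 \<in> S. \<forall>W2 \<in> S. \<exists>g \<in> carrier G. \<phi> g ` W1 = W2))"

definition primitive ::
  "('g, 'm) monoid_scheme \<Rightarrow> ('v, 'n) monoid_scheme \<Rightarrow> ('g \<Rightarrow> 'v \<Rightarrow> 'v) \<Rightarrow> bool" where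
  "primitive G V \<phi> \<longleftrightarrow> irreducible_mod G V \<phi> \<and> \<not> imprimitive G V \<phi>"

end

theory Submission
  imports Defs
begin

(* Suppose V is the internal direct sum of subgroups permuted by G, and take nonzero x, y in two
   different summands. An element h of the unique subgroup of order p^(c-1) fixing xy satisfies
   xy = (h x)(h y) with h x, h y again in two different summands, so by uniqueness of the
   decomposition h either fixes both x and y or swaps them; a swap is impossible since h has odd
   order. Hence this subgroup also fixes x and y, and by uniqueness it is the subgroup fixing x
   and the one fixing y. So all nonzero vectors of the summands share one fixing subgroup, which
   then acts trivially on V, contradicting faithfulness. A proper submodule together with a
   complement, and a system of imprimitivity, both yield such decompositions. *)

lemma (in comm_group) hom_finprod:
  assumes "comm_group H" "h \<in> hom G H" "f \<in> A \<rightarrow> carrier G"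
  shows "h (finprod G f A) = finprod H (h \<circ> f) A"
proof -
  interpret H: comm_group H by fact
  interpret group_hom G H h
    using assms(2) by (simp add: group_hom_def group_hom_axioms_def is_group H.is_group)
  show ?thesis
    using assms(3)
  proof (induction A rule: infinite_finite_induct)
    case (insert a A)
    then have "f \<in> A \<rightarrow> carrier G" by auto
    with insert show ?case by (simp add: Pi_iff)
  qed simp_all
qed

lemma (in comm_group) finprod_two_point:
  assumes "finite S" "W1 \<in> S" "W2 \<in> S" "W1 \<noteq> W2" "x \<in> carrier G" "y \<in> carrier G"
  shows "finprod G (\<lambda>W\<in>S. if W = W1 then x else if W = W2 then y else \<one>) S = x \<otimes> y"
    (is "finprod G ?f S = _")
proof -
  have "?f \<in> S \<rightarrow> carrier G"
    using assms(5,6) by auto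
  then have "finprod G ?f S = finprod G ?f {W1, W2}"
    using assms(1-3) by (intro finprod_mono_neutral_cong_right) auto
  also have "\<dots> = x \<otimes> y"
    using assms(2-6) by (simp add: finprod_insert)
  finally show ?thesis .
qed

lemma (in comm_group) internal_direct_sum_summands_unique:
  assumes sum: "internal_direct_sum G S"
    and "W1 \<in> S" "W2 \<in> S" "W1 \<noteq> W2" "A \<in> S" "B \<in> S" "A \<noteq> B"
    and "x \<in> W1" "y \<in> W2" "a \<in> A" "b \<in> B" "x \<otimes> y = a \<otimes> b" "x \<noteq> \<one>" "y \<noteq> \<one>"
  shows "(x = a \<and> y = b) \<or> (x = b \<and> y = a)"
proof -
  have fin: "finite S" and sub: "\<And>W. W \<in> S \<Longrightarrow> subgroup W G"
    and unique: "\<forall>v \<in> carrier G. \<exists>!f. f \<in> (\<Pi>\<^sub>E W\<in>S. W) \<and> finprod G f S = v"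
    using sum unfolding internal_direct_sum_def by auto
  define two_point where
    "two_point P Q p q = (\<lambda>W\<in>S. if W = P then p else if W = Q then q else \<one>)" for P Q p q
  have two_point: "two_point P Q p q \<in> (\<Pi>\<^sub>E W\<in>S. W) \<and> finprod G (two_point P Q p q) S = p \<otimes> q"
    if "P \<in> S" "Q \<in> S" "P \<noteq> Q" "p \<in> P" "q \<in> Q" for P Q p q
  proof
    show "two_point P Q p q \<in> (\<Pi>\<^sub>E W\<in>S. W)"
      using that sub[THEN subgroup.one_closed] unfolding two_point_def by (simp add: restrict_PiE_iff)
    show "finprod G (two_point P Q p q) S = p \<otimes> q"
      using that sub[THEN subgroup.subset] unfolding two_point_def by (intro finprod_two_point fin) blast+
  qed
  have "x \<otimes> y \<in> carrier G"
    using assms(2,3,8,9) sub[THEN subgroup.subset] by (meson m_closed subsetD)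
  then have "\<exists>!f. f \<in> (\<Pi>\<^sub>E W\<in>S. W) \<and> finprod G f S = x \<otimes> y"
    using unique by blast
  then have "two_point W1 W2 x y = two_point A B a b"
    using two_point[OF assms(2-4,8,9)] two_point[OF assms(5-7,10,11)] assms(12) by (metis (no_types))
  then have "two_point W1 W2 x y W1 = two_point A B a b W1"
    and "two_point W1 W2 x y W2 = two_point A B a b W2"
    by simp_all
  then have x: "x = (if W1 = A then a else if W1 = B then b else \<one>)"
    and y: "y = (if W2 = A then a else if W2 = B then b else \<one>)"
    using assms(2-4) not_sym[OF assms(4)] by (simp_all add: two_point_def)
  show ?thesis
  proof (cases "W1 = A")
    case True
    then show ?thesis
      using x y assms(4,14) by (simp split: if_split_asm)
  next
    case False
    then show ?thesis
      using x y assms(4,7,13,14) by (simp split: if_split_asm)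
  qed
qed

lemma (in comm_group) internal_direct_sum_mult_ne_one:
  assumes "internal_direct_sum G S" "W1 \<in> S" "W2 \<in> S" "W1 \<noteq> W2"
    and "x \<in> W1" "y \<in> W2" "x \<noteq> \<one>" "y \<noteq> \<one>"
  shows "x \<otimes> y \<noteq> \<one>"
proof
  have "subgroup W1 G" "subgroup W2 G"
    using assms(1-3) unfolding internal_direct_sum_def by blast+
  then have one: "\<one> \<in> W1" "\<one> \<in> W2"
    by (simp_all add: subgroup.one_closed)
  assume "x \<otimes> y = \<one>"
  then have "x \<otimes> y = \<one> \<otimes> \<one>"
    by simp
  from internal_direct_sum_summands_unique[OF assms(1-4) assms(2-4) assms(5,6) one this assms(7,8)]
  show False
    using assms(7) by blast
qed

lemma (in comm_group) internal_direct_sum_pair: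
  assumes W: "subgroup W G" and U: "subgroup U G" and distinct: "W \<noteq> U"
    and disjoint: "W \<inter> U = {\<one>}" and spanning: "W <#> U = carrier G"
  shows "internal_direct_sum G {W, U}"
  unfolding internal_direct_sum_def
proof (intro conjI ballI)
  fix v assume "v \<in> carrier G"
  then obtain w u where wu: "w \<in> W" "u \<in> U" "v = w \<otimes> u"
    using spanning unfolding set_mult_def by blast
  have WG: "W \<subseteq> carrier G" and UG: "U \<subseteq> carrier G"
    using W U subgroup.subset by auto
  have prod: "finprod G f {W, U} = f W \<otimes> f U" if "f \<in> (\<Pi>\<^sub>E Z\<in>{W, U}. Z)" for f
  proof -
    have "f W \<in> carrier G" "f U \<in> carrier G"
      using that WG UG by auto
    then show ?thesis
      using distinct by (simp add: finprod_insert)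
  qed
  show "\<exists>!f. f \<in> (\<Pi>\<^sub>E Z\<in>{W, U}. Z) \<and> finprod G f {W, U} = v"
  proof
    let ?f = "\<lambda>Z\<in>{W, U}. if Z = W then w else u"
    show "?f \<in> (\<Pi>\<^sub>E Z\<in>{W, U}. Z) \<and> finprod G ?f {W, U} = v"
      using wu distinct prod[of ?f] by auto
  next
    fix f assume f: "f \<in> (\<Pi>\<^sub>E Z\<in>{W, U}. Z) \<and> finprod G f {W, U} = v"
    then have fW: "f W \<in> W" and fU: "f U \<in> U" and "f W \<otimes> f U = w \<otimes> u"
      using prod wu by auto
    have carr: "w \<in> carrier G" "u \<in> carrier G" "f W \<in> carrier G" "f U \<in> carrier G"
      using WG UG fW fU wu by auto
    have "(inv w \<otimes> f W) \<otimes> f U = inv w \<otimes> (w \<otimes> u)"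
      using carr \<open>f W \<otimes> f U = w \<otimes> u\<close> by (simp add: m_assoc)
    also have "\<dots> = u"
      using carr by (simp add: m_assoc[symmetric])
    finally have "inv w \<otimes> f W = u \<otimes> inv (f U)"
      using carr by (simp add: inv_solve_right)
    moreover have "inv w \<otimes> f W \<in> W" "u \<otimes> inv (f U) \<in> U"
      using W U fW fU wu by (auto intro: subgroup.m_closed subgroup.m_inv_closed)
    ultimately have "inv w \<otimes> f W = \<one>" "u \<otimes> inv (f U) = \<one>"
      using disjoint by auto
    then have "f W = w" "f U = u"
      using carr by (simp_all add: inv_solve_left' inv_solve_right')
    then show "f = (\<lambda>Z\<in>{W, U}. if Z = W then w else u)"
      using f by (intro extensionalityI[where A = "{W, U}"]) (auto simp: PiE_iff)
  qed
qed (use W U in blast)+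

sublocale group_action \<subseteq> group G
  by (rule group_hom.axioms(1)[OF group_hom])

lemma (in group_action) invariant_image_eq:
  assumes "A \<subseteq> E" "\<And>g. g \<in> carrier G \<Longrightarrow> \<phi> g ` A \<subseteq> A" "g \<in> carrier G"
  shows "\<phi> g ` A = A"
proof
  show "A \<subseteq> \<phi> g ` A"
  proof
    fix a assume a: "a \<in> A"
    then have "\<phi> g (\<phi> (inv g) a) = \<phi> \<one> a"
      using assms composition_rule[of a g "inv g"] by auto
    also have "\<dots> = a"
      using a assms(1) id_eq_one[symmetric] by auto
    finally show "a \<in> \<phi> g ` A"
      using a assms by (metis image_eqI image_subset_iff inv_closed)
  qed
qed (use assms in auto)

lemma (in group_action) fixed_point_pow:
  fixes k :: nat
  assumes "g \<in> carrier G" "x \<in> E" "\<phi> g x = x"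
  shows "\<phi> (g [^] k) x = x"
proof (induction k)
  case 0
  show ?case
    using assms(2) id_eq_one[symmetric] by auto
next
  case (Suc k)
  show ?case
    using assms Suc composition_rule[of x "g [^] k" g] by (simp add: nat_pow_Suc)
qed

lemma (in group_action) swapped_by_odd_power_eq:
  fixes n :: nat
  assumes h: "h \<in> carrier G" "h [^] n = \<one>" "odd n"
    and x: "x \<in> E" "\<phi> h x = y" "\<phi> h y = x"
  shows "x = y"
proof -
  have "\<phi> (h [^] (2::nat)) x = x"
    using h x composition_rule[of x h h] by (simp add: numeral_2_eq_2 nat_pow_Suc2)
  then have "\<phi> ((h [^] (2::nat)) [^] ((n + 1) div 2)) x = x"
    using h(1) x(1) by (metis fixed_point_pow nat_pow_closed)
  moreover have "(h [^] (2::nat)) [^] ((n + 1) div 2) = h [^] (2 * ((n + 1) div 2))"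
    by (rule nat_pow_pow[OF h(1)])
  moreover have "2 * ((n + 1) div 2) = Suc n"
    using \<open>odd n\<close> by presburger
  moreover have "h [^] Suc n = h"
    using h by (simp add: nat_pow_Suc)
  ultimately have "\<phi> h x = x"
    by simp
  then show ?thesis
    using x by simp
qed

lemma (in group) pow_card_subgroup_eq_one:
  assumes "subgroup H G" "h \<in> H"
  shows "h [^] card H = \<one>"
proof -
  interpret H: group "G\<lparr>carrier := H\<rparr>"
    using subgroup_imp_group assms(1) by blast
  have "h [^]\<^bsub>G\<lparr>carrier := H\<rparr>\<^esub> card H = \<one>"
    using H.pow_order_eq_1 assms(2) by (simp add: order_def)
  then show ?thesis
    using nat_pow_consistent[of h "card H" H] by simp
qed

lemma (in faithful_action) trivial_action_eq_one:
  assumes "g \<in> carrier G" "\<And>x. x \<in> E \<Longrightarrow> \<phi> g x = x"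
  shows "g = \<one>"
proof -
  have "\<phi> g \<in> extensional E"
    using bij_prop0[OF assms(1)] Bij_imp_extensional by blast
  then have "\<phi> g = \<phi> \<one>"
    using assms(2) id_eq_one[symmetric] by (auto simp: extensional_def)
  then show ?thesis
    using faithful assms(1) by (meson one_closed inj_on_eq_iff)
qed

locale automorphism_action = group_action G "carrier V" \<phi> + V: comm_group V
  for G :: "('g, 'm) monoid_scheme" (structure) and V :: "('v, 'n) monoid_scheme" and \<phi> +
  assumes action_hom: "g \<in> carrier G \<Longrightarrow> \<phi> g \<in> hom V V"
begin

lemma action_one: "g \<in> carrier G \<Longrightarrow> \<phi> g \<one>\<^bsub>V\<^esub> = \<one>\<^bsub>V\<^esub>"
  using action_hom V.is_group by (simp add: group_hom_def group_hom_axioms_def group_hom.hom_one)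

lemma action_mult:
  "g \<in> carrier G \<Longrightarrow> x \<in> carrier V \<Longrightarrow> y \<in> carrier V \<Longrightarrow>
    \<phi> g (x \<otimes>\<^bsub>V\<^esub> y) = \<phi> g x \<otimes>\<^bsub>V\<^esub> \<phi> g y"
  using action_hom by (simp add: hom_mult)

lemma fixes_internal_direct_sum:
  assumes sum: "internal_direct_sum V S" and g: "g \<in> carrier G"
    and fixes_summands: "\<And>W w. W \<in> S \<Longrightarrow> w \<in> W \<Longrightarrow> \<phi> g w = w"
    and v: "v \<in> carrier V"
  shows "\<phi> g v = v"
proof -
  obtain f where f: "f \<in> (\<Pi>\<^sub>E W\<in>S. W)" "finprod V f S = v"
    using sum v unfolding internal_direct_sum_def by blast
  have f_summand: "f W \<in> W" if "W \<in> S" for W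
    using f(1) that by (simp add: PiE_iff)
  have "f \<in> S \<rightarrow> carrier V"
    using f_summand sum subgroup.subset unfolding internal_direct_sum_def by blast
  then have "\<phi> g (finprod V f S) = finprod V (\<phi> g \<circ> f) S"
    by (rule V.hom_finprod[OF V.comm_group_axioms action_hom[OF g]])
  also have "\<dots> = finprod V f S"
    by (rule V.finprod_cong') (simp_all add: \<open>f \<in> S \<rightarrow> carrier V\<close> fixes_summands f_summand)
  finally show ?thesis
    using f(2) by simp
qed

lemma fixes_summands_if_fixes_sum:
  fixes n :: nat
  assumes sum: "internal_direct_sum V S"
    and permuted: "\<And>g W. g \<in> carrier G \<Longrightarrow> W \<in> S \<Longrightarrow> \<phi> g ` W \<in> S"
    and W: "W1 \<in> S" "W2 \<in> S" "W1 \<noteq> W2"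
    and x: "x \<in> W1" "x \<noteq> \<one>\<^bsub>V\<^esub>" and y: "y \<in> W2" "y \<noteq> \<one>\<^bsub>V\<^esub>"
    and h: "h \<in> carrier G" "h [^] n = \<one>" "odd n" "\<phi> h (x \<otimes>\<^bsub>V\<^esub> y) = x \<otimes>\<^bsub>V\<^esub> y"
  shows "\<phi> h x = x \<and> \<phi> h y = y"
proof -
  have sub: "W1 \<subseteq> carrier V" "W2 \<subseteq> carrier V"
    using sum W subgroup.subset unfolding internal_direct_sum_def by blast+
  then have "\<phi> h ` W1 \<noteq> \<phi> h ` W2"
    using inj_prop[OF h(1)] W(3) by (simp add: inj_on_image_eq_iff)
  moreover have "x \<otimes>\<^bsub>V\<^esub> y = \<phi> h x \<otimes>\<^bsub>V\<^esub> \<phi> h y"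
    using h sub x y action_mult by (metis subsetD)
  ultimately have "(x = \<phi> h x \<and> y = \<phi> h y) \<or> (x = \<phi> h y \<and> y = \<phi> h x)"
    using V.internal_direct_sum_summands_unique[OF sum W permuted[OF h(1) W(1)] permuted[OF h(1) W(2)]]
      x y by blast
  then show ?thesis
    using swapped_by_odd_power_eq[OF h(1-3)] sub x(1) by (metis subsetD)
qed

end

locale unique_fixer_action = automorphism_action G V \<phi> + faithful_action G "carrier V" \<phi>
  for G :: "('g, 'm) monoid_scheme" (structure) and V :: "('v, 'n) monoid_scheme" and \<phi> +
  fixes n :: nat
  assumes odd_order: "odd n" and order_ne_one: "n \<noteq> 1"
    and unique_fixer: "\<And>v. v \<in> carrier V \<Longrightarrow> v \<noteq> \<one>\<^bsub>V\<^esub> \<Longrightarrow>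
      \<exists>!H. subgroup H G \<and> card H = n \<and> (\<forall>h \<in> H. \<phi> h v = v)"
begin

definition fixer :: "'v \<Rightarrow> 'g set" where
  "fixer v = (THE H. subgroup H G \<and> card H = n \<and> (\<forall>h \<in> H. \<phi> h v = v))"

lemma fixer:
  assumes "v \<in> carrier V" "v \<noteq> \<one>\<^bsub>V\<^esub>"
  shows "subgroup (fixer v) G" "card (fixer v) = n" "\<And>h. h \<in> fixer v \<Longrightarrow> \<phi> h v = v"
  using theI'[OF unique_fixer[OF assms]] unfolding fixer_def by blast+

lemma fixer_eqI:
  assumes "v \<in> carrier V" "v \<noteq> \<one>\<^bsub>V\<^esub>" "subgroup H G" "card H = n" "\<And>h. h \<in> H \<Longrightarrow> \<phi> h v = v"
  shows "fixer v = H"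
  unfolding fixer_def using assms by (intro the1_equality[OF unique_fixer[OF assms(1,2)]]) blast

lemma fixer_moves_some_vector:
  assumes "v \<in> carrier V" "v \<noteq> \<one>\<^bsub>V\<^esub>"
  obtains h u where "h \<in> fixer v" "u \<in> carrier V" "\<phi> h u \<noteq> u"
proof (rule ccontr)
  assume "\<not> thesis"
  then have "fixer v \<subseteq> {\<one>}"
    using that fixer(1)[OF assms] subgroup.subset trivial_action_eq_one by blast
  then have "card (fixer v) \<le> 1"
    using card_mono[of "{\<one>}"] by fastforce
  then show False
    using fixer(2)[OF assms] odd_order order_ne_one by presburger
qed

lemma fixer_summands_eq:
  assumes sum: "internal_direct_sum V S"
    and permuted: "\<And>g W. g \<in> carrier G \<Longrightarrow> W \<in> S \<Longrightarrow> \<phi> g ` W \<in> S"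
    and W: "W1 \<in> S" "W2 \<in> S" "W1 \<noteq> W2"
    and x: "x \<in> W1" "x \<noteq> \<one>\<^bsub>V\<^esub>" and y: "y \<in> W2" "y \<noteq> \<one>\<^bsub>V\<^esub>"
  shows "fixer x = fixer y"
proof -
  have carrier: "x \<in> carrier V" "y \<in> carrier V"
    using sum W x y subgroup.subset unfolding internal_direct_sum_def by blast+
  let ?v = "x \<otimes>\<^bsub>V\<^esub> y"
  have v: "?v \<in> carrier V" "?v \<noteq> \<one>\<^bsub>V\<^esub>"
    using carrier V.internal_direct_sum_mult_ne_one[OF sum W x(1) y(1) x(2) y(2)] by auto
  have fixed: "\<phi> h x = x \<and> \<phi> h y = y" if h: "h \<in> fixer ?v" for h
  proof -
    have "h \<in> carrier G"
      using fixer(1)[OF v] h subgroup.subset by blast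
    moreover have "h [^] n = \<one>"
      using pow_card_subgroup_eq_one[OF fixer(1)[OF v] h] fixer(2)[OF v] by simp
    ultimately show ?thesis
      using fixes_summands_if_fixes_sum[OF sum permuted W x y _ _ odd_order] fixer(3)[OF v h] by blast
  qed
  have "fixer x = fixer ?v" "fixer y = fixer ?v"
    using fixed by (intro fixer_eqI carrier x(2) y(2) fixer(1,2)[OF v]; blast)+
  then show ?thesis
    by simp
qed

lemma fixer_summand_eq:
  assumes sum: "internal_direct_sum V S"
    and permuted: "\<And>g W. g \<in> carrier G \<Longrightarrow> W \<in> S \<Longrightarrow> \<phi> g ` W \<in> S"
    and W: "W1 \<in> S" "W2 \<in> S" "W1 \<noteq> W2"
    and x: "x \<in> W1" "x \<noteq> \<one>\<^bsub>V\<^esub>" and y: "y \<in> W2" "y \<noteq> \<one>\<^bsub>V\<^esub>"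
    and w: "W \<in> S" "w \<in> W" "w \<noteq> \<one>\<^bsub>V\<^esub>"
  shows "fixer w = fixer x"
proof (cases "W = W1")
  case True
  then have "fixer w = fixer y"
    using fixer_summands_eq[OF sum permuted W _ w(3) y] w(2) by blast
  also have "\<dots> = fixer x"
    using fixer_summands_eq[OF sum permuted W x y] by simp
  finally show ?thesis .
next
  case False
  then show ?thesis
    using fixer_summands_eq[OF sum permuted W(1) w(1) _ x w(2,3)] by simp
qed

theorem no_permuted_internal_direct_sum:
  assumes sum: "internal_direct_sum V S"
    and permuted: "\<And>g W. g \<in> carrier G \<Longrightarrow> W \<in> S \<Longrightarrow> \<phi> g ` W \<in> S"
    and W: "W1 \<in> S" "W2 \<in> S" "W1 \<noteq> W2" "W1 \<noteq> {\<one>\<^bsub>V\<^esub>}" "W2 \<noteq> {\<one>\<^bsub>V\<^esub>}"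
  shows False
proof -
  have sub: "\<And>W. W \<in> S \<Longrightarrow> subgroup W V"
    using sum unfolding internal_direct_sum_def by blast
  obtain x y where x: "x \<in> W1" "x \<noteq> \<one>\<^bsub>V\<^esub>" and y: "y \<in> W2" "y \<noteq> \<one>\<^bsub>V\<^esub>"
    using W sub subgroup.one_closed by blast
  have x_carrier: "x \<in> carrier V"
    using x sub[OF W(1)] subgroup.subset by blast
  have fixer_G: "h \<in> carrier G" if "h \<in> fixer x" for h
    using fixer(1)[OF x_carrier x(2)] that subgroup.subset by blast
  have fixed: "\<phi> h w = w" if h: "h \<in> fixer x" and w: "W \<in> S" "w \<in> W" for h W w
  proof (cases "w = \<one>\<^bsub>V\<^esub>")
    case True
    then show ?thesis
      using action_one fixer_G[OF h] by simp
  next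
    case False
    have "w \<in> carrier V"
      using w sub subgroup.subset by blast
    then show ?thesis
      using fixer(3)[of w] fixer_summand_eq[OF sum permuted W(1-3) x y w False] h False by simp
  qed
  obtain h u where h: "h \<in> fixer x" and u: "u \<in> carrier V" "\<phi> h u \<noteq> u"
    using fixer_moves_some_vector[OF x_carrier x(2)] .
  then show False
    using fixes_internal_direct_sum[OF sum fixer_G[OF h] _ u(1)] fixed[OF h] by blast
qed

lemma trivial_module_imp_trivial_group:
  assumes "carrier V = {\<one>\<^bsub>V\<^esub>}"
  shows "carrier G = {\<one>}"
proof -
  have "g = \<one>" if "g \<in> carrier G" for g
    using that assms action_one[OF that] by (intro trivial_action_eq_one) auto
  then show ?thesis
    by blast
qed

lemma irreducible_if_completely_reducible:
  assumes reducible: "completely_reducible G V \<phi>" and nontrivial: "carrier V \<noteq> {\<one>\<^bsub>V\<^esub>}"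
  shows "irreducible_mod G V \<phi>"
  unfolding irreducible_mod_def
proof (intro conjI allI impI nontrivial)
  fix W assume W: "submodule G V \<phi> W"
  show "W = {\<one>\<^bsub>V\<^esub>} \<or> W = carrier V"
  proof (rule ccontr)
    assume "\<not> ?thesis"
    then have proper: "W \<noteq> {\<one>\<^bsub>V\<^esub>}" "W \<noteq> carrier V"
      by auto
    obtain U where U: "submodule G V \<phi> U" "W \<inter> U = {\<one>\<^bsub>V\<^esub>}" "W <#>\<^bsub>V\<^esub> U = carrier V"
      using reducible W unfolding completely_reducible_def by blast
    have subgroups: "subgroup W V" "subgroup U V"
      using W U(1) unfolding submodule_def by blast+
    have "U \<noteq> {\<one>\<^bsub>V\<^esub>}"
    proof
      assume "U = {\<one>\<^bsub>V\<^esub>}"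
      then have "W <#>\<^bsub>V\<^esub> U = W"
        using subgroups(1) subgroup.subset by (force simp: set_mult_def)
      then show False
        using U(3) proper(2) by simp
    qed
    moreover have "W \<noteq> U"
      using U(2) proper(1) by auto
    moreover have "\<phi> g ` Z \<in> {W, U}" if "g \<in> carrier G" "Z \<in> {W, U}" for g Z
      using that W U(1) subgroup.subset invariant_image_eq
      unfolding submodule_def by (metis insertCI insertE singletonD)
    ultimately show False
      using no_permuted_internal_direct_sum[OF V.internal_direct_sum_pair[OF subgroups _ U(2,3)]] proper(1)
      by blast
  qed
qed

lemma not_imprimitive: "\<not> imprimitive G V \<phi>"
proof
  assume "imprimitive G V \<phi>"
  then obtain S where sum: "internal_direct_sum V S" and "card S \<ge> 2"
    and permuted: "\<forall>g \<in> carrier G. \<forall>W \<in> S. \<phi> g ` W \<in> S"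
    and transitive: "\<forall>W1 \<in> S. \<forall>W2 \<in> S. \<exists>g \<in> carrier G. \<phi> g ` W1 = W2"
    unfolding imprimitive_def by blast
  moreover have "finite S"
    using sum unfolding internal_direct_sum_def by blast
  ultimately obtain W1 W2 where W: "W1 \<in> S" "W2 \<in> S" "W1 \<noteq> W2"
    using card_le_Suc0_iff_eq[of S] by (metis not_less_eq_eq numeral_2_eq_2)
  have nontrivial: "W \<noteq> {\<one>\<^bsub>V\<^esub>}" if "W \<in> S" for W
  proof
    assume trivial: "W = {\<one>\<^bsub>V\<^esub>}"
    have "Z = {\<one>\<^bsub>V\<^esub>}" if "Z \<in> S" for Z
    proof -
      obtain g where "g \<in> carrier G" "\<phi> g ` W = Z"
        using transitive \<open>W \<in> S\<close> \<open>Z \<in> S\<close> by blast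
      then show ?thesis
        using trivial action_one by auto
    qed
    then show False
      using W by metis
  qed
  show False
    using no_permuted_internal_direct_sum[OF sum _ W nontrivial[OF W(1)] nontrivial[OF W(2)]] permuted
    by blast
qed

end

theorem lemma2p3:
  fixes G :: "'g monoid" and V :: "'v monoid" and \<phi> :: "'g \<Rightarrow> 'v \<Rightarrow> 'v"
    and p r c :: nat
  assumes "Factorial_Ring.prime p" and "Factorial_Ring.prime r" and "p \<noteq> r" and "p \<ge> 3"
    and "group G" and "finite (carrier G)"
    and "O_p_prime_upper G p = carrier G"
    and "elem_abelian V r"
    and "faithful_lin_action G V \<phi>"
    and "completely_reducible G V \<phi>"
    and "multiplicity p (order G) = c" and "c \<ge> 2"
    and "card (O_p G p) = p"
    and "\<exists>x \<in> carrier G. O_p G p = generate G {x}"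
    and "\<forall>x \<in> O_p G p. x \<noteq> \<one>\<^bsub>G\<^esub> \<longrightarrow>
           (\<forall>v \<in> carrier V. \<phi> x v = v \<longrightarrow> v = \<one>\<^bsub>V\<^esub>)"
    and "\<forall>v \<in> carrier V. v \<noteq> \<one>\<^bsub>V\<^esub> \<longrightarrow>
           (\<exists>!H. subgroup H G \<and> card H = p ^ (c - 1) \<and> (\<forall>h \<in> H. \<phi> h v = v))"
  shows "primitive G V \<phi>"
proof -
  have "odd (p ^ (c - 1))"
    using prime_odd_nat[OF assms(1)] assms(4) by simp
  moreover have "p ^ (c - 1) \<noteq> 1"
    using assms(4,12) by simp
  moreover have "comm_group V"
    using assms(8) unfolding elem_abelian_def by blast
  moreover have "group_action G (carrier V) \<phi>" "\<And>g. g \<in> carrier G \<Longrightarrow> \<phi> g \<in> hom V V"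
    "inj_on \<phi> (carrier G)"
    using assms(9) unfolding faithful_lin_action_def linear_action_def by blast+
  ultimately interpret unique_fixer_action G V \<phi> "p ^ (c - 1)"
    using assms(5,16)
    by (intro unique_fixer_action.intro automorphism_action.intro faithful_action.intro
        automorphism_action_axioms.intro faithful_action_axioms.intro unique_fixer_action_axioms.intro)
      simp_all
  have "carrier G \<noteq> {\<one>\<^bsub>G\<^esub>}"
    using assms(11,12) by (auto simp: order_def)
  then have "carrier V \<noteq> {\<one>\<^bsub>V\<^esub>}"
    using trivial_module_imp_trivial_group by blast
  then show ?thesis
    unfolding primitive_def
    using irreducible_if_completely_reducible[OF assms(10)] not_imprimitive by blast
qed

end
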